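(* In the pre-cylinder category $\mathcal C^\Delta_0$, for every $n\ge 1$ and $0\le k\le n$, the horn inclusion $\Lambda^n_k\hookrightarrow\Delta_n$ is a trivial cofibration (a monomorphism which belongs to the class of weak equivalences).
   Context: Let $\Delta$ denote the semi-simplicial category: objects the finite nonempty ordinals $[n]=\{0,\dots,n\}$, morphisms the injective order-preserving maps. A finite semi-simplicial set is a presheaf on $\Delta$ with finitely many simplices in total. $\mathcal C^\Delta_0$ is the category of finite semi-simplicial sets, with monomorphisms as cofibrations and with weak equivalences the smallest class $W$ of morphisms which contains all morphisms between representable presheaves $\Delta_m\to\Delta_n$ and makes $\mathcal C^\Delta_0$ a pre-cylinder category, i.e. $W$ contains isomorphisms, is closed under composition, satisfies 2-out-of-6 (if $f,g,h$ are composable with $f\circ g,g\circ h\in W$ then $f,g,h,f\circ g\circ h\in W$), and satisfies the cube lemma (given a natural transformation between spans $B\leftarrow A\to C$ and $B'\leftarrow A'\to C'$ with $A\to B$, $A'\to B'$ monomorphisms and the three components in $W$, the induced map $B\sqcup_AC\to B'\sqcup_{A'}C'$ is in $W$). Here $\Delta_n$ is the representable on $[n]$; $\Lambda^n_k\subset\Delta_n$ is the sub-presheaf of maps $f:[v]\to[n]$ whose image avoids at least one value different from $k$. *)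

theory Defs
  imports Main
begin

text \<open>Morphisms [m] -> [n] of the semi-simplicial category (injective order-preserving
maps) are encoded as strictly increasing lists f of length m+1 with entries in {0..n};
f ! i is the image of i.  Simplices of the finite semi-simplicial sets are taken in the
countably infinite type nat list (every finite semi-simplicial set is isomorphic to one
of these).\<close>

definition inj_mono :: "nat \<Rightarrow> nat \<Rightarrow> nat list \<Rightarrow> bool" where
  "inj_mono m n f \<longleftrightarrow> length f = Suc m \<and> sorted_wrt (<) f \<and> (\<forall>i\<in>set f. i \<le> n)"

definition dcomp :: "nat list \<Rightarrow> nat list \<Rightarrow> nat list" where
  "dcomp g f = map ((!) g) f"

definition did :: "nat \<Rightarrow> nat list" where
  "did n = [0..<Suc n]"

text \<open>A semi-simplicial set: simplices of each dimension and the action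
Face X m n f : X_n -> X_m of f : [m] -> [n] (extensional: undefined off its domain).\<close>
record 'a sss =
  Simp :: "nat \<Rightarrow> 'a set"
  Face :: "nat \<Rightarrow> nat \<Rightarrow> nat list \<Rightarrow> 'a \<Rightarrow> 'a"

type_synonym ss = "nat list sss"
type_synonym shom = "nat \<Rightarrow> nat list \<Rightarrow> nat list"
type_synonym sarrow = "ss \<times> ss \<times> shom"

text \<open>Finite semi-simplicial sets (objects of C^Delta_0).\<close>
definition fsss :: "ss \<Rightarrow> bool" where
  "fsss X \<longleftrightarrow>
     (\<forall>m n f x. inj_mono m n f \<and> x \<in> Simp X n \<longrightarrow> Face X m n f x \<in> Simp X m) \<and>
     (\<forall>m n f x. \<not> (inj_mono m n f \<and> x \<in> Simp X n) \<longrightarrow> Face X m n f x = undefined) \<and>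
     (\<forall>n x. x \<in> Simp X n \<longrightarrow> Face X n n (did n) x = x) \<and>
     (\<forall>m n p f g x. inj_mono m n f \<and> inj_mono n p g \<and> x \<in> Simp X p \<longrightarrow>
        Face X m p (dcomp g f) x = Face X m n f (Face X n p g x)) \<and>
     finite (SIGMA n:UNIV. Simp X n)"

definition shom :: "ss \<Rightarrow> ss \<Rightarrow> shom \<Rightarrow> bool" where
  "shom X Y g \<longleftrightarrow>
     (\<forall>n x. x \<in> Simp X n \<longrightarrow> g n x \<in> Simp Y n) \<and>
     (\<forall>n x. x \<notin> Simp X n \<longrightarrow> g n x = undefined) \<and>
     (\<forall>m n f x. inj_mono m n f \<and> x \<in> Simp X n \<longrightarrow>
        g m (Face X m n f x) = Face Y m n f (g n x))"

definition arrows :: "sarrow set" where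
  "arrows = {(X, Y, g). fsss X \<and> fsss Y \<and> shom X Y g}"

definition cmp :: "ss \<Rightarrow> shom \<Rightarrow> shom \<Rightarrow> shom" where
  "cmp X g h = (\<lambda>n x. if x \<in> Simp X n then h n (g n x) else undefined)"

definition idm :: "ss \<Rightarrow> shom" where
  "idm X = (\<lambda>n x. if x \<in> Simp X n then x else undefined)"

definition is_iso :: "ss \<Rightarrow> ss \<Rightarrow> shom \<Rightarrow> bool" where
  "is_iso X Y g \<longleftrightarrow> shom X Y g \<and>
     (\<exists>g'. shom Y X g' \<and> cmp X g g' = idm X \<and> cmp Y g' g = idm Y)"

definition is_mono :: "ss \<Rightarrow> ss \<Rightarrow> shom \<Rightarrow> bool" where
  "is_mono X Y g \<longleftrightarrow> shom X Y g \<and>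
     (\<forall>T u v. fsss T \<and> shom T X u \<and> shom T X v \<and> cmp T u g = cmp T v g \<longrightarrow> u = v)"

definition is_pushout :: "ss \<Rightarrow> ss \<Rightarrow> ss \<Rightarrow> shom \<Rightarrow> shom \<Rightarrow> ss \<Rightarrow> shom \<Rightarrow> shom \<Rightarrow> bool" where
  "is_pushout A B C f g P i j \<longleftrightarrow>
     fsss P \<and> shom B P i \<and> shom C P j \<and> cmp A f i = cmp A g j \<and>
     (\<forall>Q u v. fsss Q \<and> shom B Q u \<and> shom C Q v \<and> cmp A f u = cmp A g v \<longrightarrow>
        (\<exists>!w. shom P Q w \<and> cmp B i w = u \<and> cmp C j w = v))"

text \<open>W makes C^Delta_0 (with monos as cofibrations) a pre-cylinder category.\<close>
definition precyl_W :: "sarrow set \<Rightarrow> bool" where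
  "precyl_W W \<longleftrightarrow>
     W \<subseteq> arrows \<and>
     (\<forall>X Y g. fsss X \<and> fsss Y \<and> is_iso X Y g \<longrightarrow> (X, Y, g) \<in> W) \<and>
     (\<forall>X Y Z g h. (X, Y, g) \<in> W \<and> (Y, Z, h) \<in> W \<longrightarrow> (X, Z, cmp X g h) \<in> W) \<and>
     (\<forall>X0 X1 X2 X3 h g f.
        (X0, X1, h) \<in> arrows \<and> (X1, X2, g) \<in> arrows \<and> (X2, X3, f) \<in> arrows \<and>
        (X0, X2, cmp X0 h g) \<in> W \<and> (X1, X3, cmp X1 g f) \<in> W \<longrightarrow>
        (X0, X1, h) \<in> W \<and> (X1, X2, g) \<in> W \<and> (X2, X3, f) \<in> W \<and>
        (X0, X3, cmp X0 (cmp X0 h g) f) \<in> W) \<and>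
     (\<forall>A B C f g A' B' C' f' g' a b c P i j P' i' j' p.
        fsss A \<and> fsss B \<and> fsss C \<and> fsss A' \<and> fsss B' \<and> fsss C' \<and>
        is_mono A B f \<and> shom A C g \<and> is_mono A' B' f' \<and> shom A' C' g' \<and>
        (A, A', a) \<in> W \<and> (B, B', b) \<in> W \<and> (C, C', c) \<in> W \<and>
        cmp A f b = cmp A a f' \<and> cmp A g c = cmp A a g' \<and>
        is_pushout A B C f g P i j \<and> is_pushout A' B' C' f' g' P' i' j' \<and>
        shom P P' p \<and> cmp B i p = cmp B b i' \<and> cmp C j p = cmp C c j' \<longrightarrow>
        (P, P', p) \<in> W)"

definition Delta :: "nat \<Rightarrow> ss" where
  "Delta n = \<lparr> Simp = (\<lambda>v. {x. inj_mono v n x}),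
     Face = (\<lambda>m v f x. if inj_mono m v f \<and> inj_mono v n x then dcomp x f else undefined) \<rparr>"

definition horn_simp :: "nat \<Rightarrow> nat \<Rightarrow> nat \<Rightarrow> nat list set" where
  "horn_simp n k v = {x. inj_mono v n x \<and> (\<exists>j\<le>n. j \<noteq> k \<and> j \<notin> set x)}"

definition Horn :: "nat \<Rightarrow> nat \<Rightarrow> ss" where
  "Horn n k = \<lparr> Simp = horn_simp n k,
     Face = (\<lambda>m v f x. if inj_mono m v f \<and> x \<in> horn_simp n k v then dcomp x f else undefined) \<rparr>"

definition horn_incl :: "nat \<Rightarrow> nat \<Rightarrow> shom" where
  "horn_incl n k = idm (Horn n k)"

definition W0 :: "sarrow set" where
  "W0 = \<Inter> {W. precyl_W W \<and> {(Delta m, Delta n, g) | m n g. shom (Delta m) (Delta n) g} \<subseteq> W}"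

end

theory Submission
  imports Defs
begin

text \<open>The horn \<open>\<Lambda>\<^sup>n\<^sub>k\<close> is the union of the facets of \<open>\<Delta>\<^sub>n\<close> opposite to the
vertices \<open>j \<noteq> k\<close>. A face of \<open>\<Delta>\<^sub>n\<close> spanned by \<open>s + 1\<close> vertices is isomorphic to
\<open>\<Delta>\<^sub>s\<close>, so 2-out-of-6 makes all inclusions of faces into \<open>\<Delta>\<^sub>n\<close> and into each other
weak equivalences. More generally, for a face \<open>S\<close> and a nonempty proper set \<open>J\<close> of its
vertices, the union of the facets of \<open>S\<close> opposite to the vertices in \<open>J\<close> includes into
\<open>S\<close> by a weak equivalence. This is proved by induction on \<open>|S|\<close> and then on \<open>J\<close>:
adding a facet \<open>L\<close> to such a union \<open>K\<close> gives the pushout \<open>K \<union> L = K \<squnion>\<^bsub>K \<inter> L\<^esub> L\<close>,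
and \<open>K \<inter> L\<close> is a union of the same kind inside the smaller face \<open>L\<close>, so the cube lemma
applied to \<open>K \<leftarrow> K \<inter> L \<rightarrow> K \<inter> L\<close> and \<open>K \<leftarrow> K \<inter> L \<rightarrow> L\<close> shows \<open>K \<subseteq> K \<union> L\<close> is one.\<close>

lemma inj_mono_nth_less: "inj_mono m v f \<Longrightarrow> i \<in> set f \<Longrightarrow> i < Suc v"
  unfolding inj_mono_def by auto

lemma inj_mono_le: "inj_mono v n x \<Longrightarrow> v \<le> n"
proof -
  assume "inj_mono v n x"
  hence "distinct x" "set x \<subseteq> {..n}" "length x = Suc v"
    unfolding inj_mono_def by (auto simp: strict_sorted_iff)
  hence "Suc v \<le> card {..n}" by (metis card_mono distinct_card finite_atMost)
  thus ?thesis by simp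
qed

lemma inj_mono_did: "inj_mono v v (did v)"
  unfolding inj_mono_def did_def by (simp del: upt_Suc)

lemma dcomp_did: "length x = Suc v \<Longrightarrow> dcomp x (did v) = x"
  unfolding dcomp_def did_def by (metis map_nth upt_conv_Cons zero_less_Suc)

lemma inj_mono_dcomp:
  assumes f: "inj_mono m v f" and x: "inj_mono v n x"
  shows "inj_mono m n (dcomp x f)"
proof -
  have f_lt: "\<forall>i\<in>set f. i < length x" using inj_mono_nth_less[OF f] x unfolding inj_mono_def by auto
  have "sorted_wrt (\<lambda>a b. x ! a < x ! b) f"
    using f x f_lt unfolding inj_mono_def by (auto simp: sorted_wrt_iff_nth_less)
  thus ?thesis using f x f_lt unfolding inj_mono_def dcomp_def by (auto simp: sorted_wrt_map)
qed

lemma set_dcomp_subset: "inj_mono m v f \<Longrightarrow> length x = Suc v \<Longrightarrow> set (dcomp x f) \<subseteq> set x"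
  unfolding dcomp_def using inj_mono_nth_less by fastforce

lemma dcomp_assoc: "inj_mono m v f \<Longrightarrow> inj_mono v p g \<Longrightarrow> dcomp x (dcomp g f) = dcomp (dcomp x g) f"
  unfolding dcomp_def using inj_mono_nth_less unfolding inj_mono_def by fastforce

lemma strict_sorted_nth_inverse:
  fixes xs :: "'a::linorder list"
  assumes sorted: "sorted_wrt (<) xs"
  obtains \<iota> where "\<And>a. a \<in> set xs \<Longrightarrow> \<iota> a < length xs \<and> xs ! \<iota> a = a"
    and "\<And>i. i < length xs \<Longrightarrow> \<iota> (xs ! i) = i"
    and "\<And>a b. a \<in> set xs \<Longrightarrow> b \<in> set xs \<Longrightarrow> a < b \<Longrightarrow> \<iota> a < \<iota> b"
proof
  define \<iota> where "\<iota> = the_inv_into {..<length xs} ((!) xs)"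
  have inj: "inj_on ((!) xs) {..<length xs}"
    using sorted by (intro inj_on_nth) (auto simp: strict_sorted_iff)
  have img: "(!) xs ` {..<length xs} = set xs" by (auto simp: in_set_conv_nth)
  show inv: "\<iota> a < length xs \<and> xs ! \<iota> a = a" if "a \<in> set xs" for a
    using the_inv_into_into[OF inj] f_the_inv_into_f[OF inj] that img unfolding \<iota>_def by auto
  show "\<iota> (xs ! i) = i" if "i < length xs" for i
    using the_inv_into_f_f[OF inj] that unfolding \<iota>_def by auto
  show "\<iota> a < \<iota> b" if "a \<in> set xs" "b \<in> set xs" "a < b" for a b
  proof (rule ccontr)
    assume "\<not> \<iota> a < \<iota> b"
    hence "xs ! \<iota> b \<le> xs ! \<iota> a"
      using inv[OF that(1)] inv[OF that(2)] sorted_nth_mono[OF strict_sorted_imp_sorted[OF sorted]]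
      by (metis not_less)
    thus False using inv that by auto
  qed
qed

definition is_sub_Delta :: "nat \<Rightarrow> (nat \<Rightarrow> nat list set) \<Rightarrow> bool" where
  "is_sub_Delta n K \<longleftrightarrow> (\<forall>v x. x \<in> K v \<longrightarrow> inj_mono v n x) \<and>
     (\<forall>m v f x. x \<in> K v \<and> inj_mono m v f \<longrightarrow> dcomp x f \<in> K m)"

definition sub_Delta :: "(nat \<Rightarrow> nat list set) \<Rightarrow> ss" where
  "sub_Delta K = \<lparr>Simp = K,
     Face = (\<lambda>m v f x. if inj_mono m v f \<and> x \<in> K v then dcomp x f else undefined)\<rparr>"

lemma is_sub_DeltaI:
  "(\<And>v x. x \<in> K v \<Longrightarrow> inj_mono v n x) \<Longrightarrow>
   (\<And>m v f x. x \<in> K v \<Longrightarrow> inj_mono m v f \<Longrightarrow> dcomp x f \<in> K m) \<Longrightarrow> is_sub_Delta n K"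
  unfolding is_sub_Delta_def by blast

lemma is_sub_Delta_inj_mono: "is_sub_Delta n K \<Longrightarrow> x \<in> K v \<Longrightarrow> inj_mono v n x"
  unfolding is_sub_Delta_def by blast

lemma is_sub_Delta_dcomp: "is_sub_Delta n K \<Longrightarrow> x \<in> K v \<Longrightarrow> inj_mono m v f \<Longrightarrow> dcomp x f \<in> K m"
  unfolding is_sub_Delta_def by blast

lemma is_sub_Delta_inf: "is_sub_Delta n K \<Longrightarrow> is_sub_Delta n L \<Longrightarrow> is_sub_Delta n (inf K L)"
  unfolding is_sub_Delta_def by auto

lemma is_sub_Delta_sup: "is_sub_Delta n K \<Longrightarrow> is_sub_Delta n L \<Longrightarrow> is_sub_Delta n (sup K L)"
  unfolding is_sub_Delta_def by auto

lemma Simp_sub_Delta [simp]: "Simp (sub_Delta K) = K"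
  by (simp add: sub_Delta_def)

lemma Face_sub_Delta:
  "Face (sub_Delta K) m v f x = (if inj_mono m v f \<and> x \<in> K v then dcomp x f else undefined)"
  by (simp add: sub_Delta_def)

lemma idm_sub_Delta: "idm (sub_Delta K) v x = (if x \<in> K v then x else undefined)"
  by (simp add: idm_def)

lemma Delta_eq_sub_Delta: "Delta n = sub_Delta (\<lambda>v. {x. inj_mono v n x})"
  unfolding Delta_def sub_Delta_def by simp

lemma fsss_sub_Delta:
  assumes K: "is_sub_Delta n K"
  shows "fsss (sub_Delta K)"
proof -
  have "(SIGMA v:UNIV. K v) \<subseteq> (SIGMA v:{..n}. {xs. set xs \<subseteq> {..n} \<and> length xs = Suc v})"
    using is_sub_Delta_inj_mono[OF K] inj_mono_le unfolding inj_mono_def by fastforce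
  moreover have "finite (SIGMA v:{..n}. {xs. set xs \<subseteq> {..n} \<and> length xs = Suc v})"
    by (intro finite_SigmaI finite_lists_length_eq) auto
  ultimately have "finite (SIGMA v:UNIV. K v)" by (rule finite_subset)
  moreover have "length x = Suc v" if "x \<in> K v" for v x
    using is_sub_Delta_inj_mono[OF K that] unfolding inj_mono_def by simp
  ultimately show ?thesis
    using is_sub_Delta_dcomp[OF K] is_sub_Delta_inj_mono[OF K]
    unfolding fsss_def Simp_sub_Delta Face_sub_Delta
    by (auto simp: inj_mono_did dcomp_did inj_mono_dcomp dcomp_assoc)
qed

lemma shom_sub_DeltaI:
  assumes "\<And>v x. x \<in> K v \<Longrightarrow> g v x \<in> L v" "\<And>v x. x \<notin> K v \<Longrightarrow> g v x = undefined"
    and "\<And>m v f x. inj_mono m v f \<Longrightarrow> x \<in> K v \<Longrightarrow> g m (dcomp x f) = dcomp (g v x) f"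
  shows "shom (sub_Delta K) (sub_Delta L) g"
  using assms unfolding shom_def Face_sub_Delta by auto

lemma shom_sub_Delta_mono:
  "shom (sub_Delta K) (sub_Delta L) g \<Longrightarrow> L \<le> M \<Longrightarrow> shom (sub_Delta K) (sub_Delta M) g"
  unfolding shom_def Face_sub_Delta le_fun_def by (auto; blast)

lemma shom_idm_sub_Delta:
  "is_sub_Delta n K \<Longrightarrow> K \<le> L \<Longrightarrow> shom (sub_Delta K) (sub_Delta L) (idm (sub_Delta K))"
  by (rule shom_sub_DeltaI) (auto simp: idm_sub_Delta le_fun_def is_sub_Delta_dcomp)

lemma cmp_idm_sub_Delta:
  "K \<le> L \<Longrightarrow> cmp (sub_Delta K) (idm (sub_Delta K)) (idm (sub_Delta L)) = idm (sub_Delta K)"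
  unfolding cmp_def idm_sub_Delta le_fun_def by (auto intro!: ext) blast

lemma is_mono_idm_sub_Delta:
  assumes K: "is_sub_Delta n K" and KL: "K \<le> L"
  shows "is_mono (sub_Delta K) (sub_Delta L) (idm (sub_Delta K))"
  unfolding is_mono_def
proof (intro conjI allI impI)
  show "shom (sub_Delta K) (sub_Delta L) (idm (sub_Delta K))" using shom_idm_sub_Delta[OF K KL] .
  fix T u w
  assume a: "fsss T \<and> shom T (sub_Delta K) u \<and> shom T (sub_Delta K) w \<and>
     cmp T u (idm (sub_Delta K)) = cmp T w (idm (sub_Delta K))"
  show "u = w"
  proof (intro ext)
    fix m x
    have "cmp T u (idm (sub_Delta K)) m x = cmp T w (idm (sub_Delta K)) m x" using a by simp
    thus "u m x = w m x" using a unfolding shom_def cmp_def idm_sub_Delta by (cases "x \<in> Simp T m") auto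
  qed
qed

lemma is_pushout_sub_Delta:
  assumes B: "is_sub_Delta n B" and C: "is_sub_Delta n C"
  shows "is_pushout (sub_Delta (inf B C)) (sub_Delta B) (sub_Delta C)
           (idm (sub_Delta (inf B C))) (idm (sub_Delta (inf B C))) (sub_Delta (sup B C))
           (idm (sub_Delta B)) (idm (sub_Delta C))"
  unfolding is_pushout_def
proof (intro conjI allI impI)
  show "fsss (sub_Delta (sup B C))" using fsss_sub_Delta[OF is_sub_Delta_sup[OF B C]] .
  show "shom (sub_Delta B) (sub_Delta (sup B C)) (idm (sub_Delta B))"
    using shom_idm_sub_Delta[OF B] by simp
  show "shom (sub_Delta C) (sub_Delta (sup B C)) (idm (sub_Delta C))"
    using shom_idm_sub_Delta[OF C] by simp
  show "cmp (sub_Delta (inf B C)) (idm (sub_Delta (inf B C))) (idm (sub_Delta B)) =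
        cmp (sub_Delta (inf B C)) (idm (sub_Delta (inf B C))) (idm (sub_Delta C))"
    by (simp add: cmp_idm_sub_Delta)
next
  fix Q u v
  assume a: "fsss Q \<and> shom (sub_Delta B) Q u \<and> shom (sub_Delta C) Q v \<and>
     cmp (sub_Delta (inf B C)) (idm (sub_Delta (inf B C))) u =
     cmp (sub_Delta (inf B C)) (idm (sub_Delta (inf B C))) v"
  have u: "shom (sub_Delta B) Q u" and v: "shom (sub_Delta C) Q v"
    and uv: "\<And>m x. cmp (sub_Delta (inf B C)) (idm (sub_Delta (inf B C))) u m x =
       cmp (sub_Delta (inf B C)) (idm (sub_Delta (inf B C))) v m x"
    using a by auto
  have agree: "u m x = v m x" if "x \<in> B m" "x \<in> C m" for m x
    using uv[of m x] that unfolding cmp_def idm_sub_Delta by simp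
  have u_undef: "u m x = undefined" if "x \<notin> B m" for m x using u that unfolding shom_def by auto
  have v_undef: "v m x = undefined" if "x \<notin> C m" for m x using v that unfolding shom_def by auto
  define w where "w = (\<lambda>m x. if x \<in> B m then u m x else v m x)"
  have u_face: "u m (dcomp x f) = Face Q m k f (u k x)" if "inj_mono m k f" "x \<in> B k" for m k f x
    using u that unfolding shom_def by (auto simp: Face_sub_Delta)
  have v_face: "v m (dcomp x f) = Face Q m k f (v k x)" if "inj_mono m k f" "x \<in> C k" for m k f x
    using v that unfolding shom_def by (auto simp: Face_sub_Delta)
  have "shom (sub_Delta (sup B C)) Q w"
    unfolding shom_def Face_sub_Delta
  proof (intro conjI allI impI)
    fix m x assume "x \<in> Simp (sub_Delta (sup B C)) m"
    thus "w m x \<in> Simp Q m" using u v unfolding w_def shom_def by auto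
  next
    fix m x assume "x \<notin> Simp (sub_Delta (sup B C)) m"
    thus "w m x = undefined" using v_undef unfolding w_def by auto
  next
    fix m k f x assume fx: "inj_mono m k f \<and> x \<in> Simp (sub_Delta (sup B C)) k"
    show "w m (if inj_mono m k f \<and> x \<in> sup B C k then dcomp x f else undefined) = Face Q m k f (w k x)"
      using fx u_face v_face agree is_sub_Delta_dcomp[OF B] is_sub_Delta_dcomp[OF C]
      unfolding w_def by auto
  qed
  moreover have "cmp (sub_Delta B) (idm (sub_Delta B)) w = u"
    unfolding cmp_def idm_sub_Delta w_def by (auto intro!: ext simp: u_undef)
  moreover have "cmp (sub_Delta C) (idm (sub_Delta C)) w = v"
    unfolding cmp_def idm_sub_Delta w_def by (auto intro!: ext simp: agree v_undef)
  moreover have "w' = w" if "shom (sub_Delta (sup B C)) Q w'"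
    "cmp (sub_Delta B) (idm (sub_Delta B)) w' = u" "cmp (sub_Delta C) (idm (sub_Delta C)) w' = v" for w'
  proof (intro ext)
    fix m x
    show "w' m x = w m x"
      using that(1) fun_cong[OF fun_cong[OF that(2)], of m x] fun_cong[OF fun_cong[OF that(3)], of m x]
      unfolding shom_def cmp_def idm_sub_Delta w_def by (auto split: if_splits)
  qed
  ultimately show "\<exists>!w. shom (sub_Delta (sup B C)) Q w \<and>
      cmp (sub_Delta B) (idm (sub_Delta B)) w = u \<and> cmp (sub_Delta C) (idm (sub_Delta C)) w = v"
    by blast
qed

lemma precyl_W_arrows:
  "precyl_W W \<Longrightarrow> (X, Y, g) \<in> W \<Longrightarrow> fsss X \<and> fsss Y \<and> shom X Y g"
  unfolding precyl_W_def arrows_def by (elim conjE) blast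

lemma precyl_W_iso:
  "precyl_W W \<Longrightarrow> fsss X \<Longrightarrow> fsss Y \<Longrightarrow> is_iso X Y g \<Longrightarrow> (X, Y, g) \<in> W"
  unfolding precyl_W_def by (elim conjE) blast

lemma precyl_W_2_out_of_6:
  assumes "precyl_W W"
    and "(A, B, h) \<in> arrows" "(B, C, g) \<in> arrows" "(C, D, f) \<in> arrows"
    and "(A, C, cmp A h g) \<in> W" "(B, D, cmp B g f) \<in> W"
  shows "(A, B, h) \<in> W" "(B, C, g) \<in> W" "(C, D, f) \<in> W"
  using assms(1)[unfolded precyl_W_def, THEN conjunct2, THEN conjunct2, THEN conjunct2,
      THEN conjunct1, rule_format] assms(2-)
  by blast+

lemma precyl_W_cube:
  assumes "precyl_W W"
    and "fsss A \<and> fsss B \<and> fsss C \<and> fsss A' \<and> fsss B' \<and> fsss C' \<and>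
       is_mono A B f \<and> shom A C g \<and> is_mono A' B' f' \<and> shom A' C' g' \<and>
       (A, A', a) \<in> W \<and> (B, B', b) \<in> W \<and> (C, C', c) \<in> W \<and>
       cmp A f b = cmp A a f' \<and> cmp A g c = cmp A a g' \<and>
       is_pushout A B C f g P i j \<and> is_pushout A' B' C' f' g' P' i' j' \<and>
       shom P P' p \<and> cmp B i p = cmp B b i' \<and> cmp C j p = cmp C c j'"
  shows "(P, P', p) \<in> W"
  using assms(1)[unfolded precyl_W_def, THEN conjunct2, THEN conjunct2, THEN conjunct2,
      THEN conjunct2, rule_format, OF assms(2)] .

lemma precyl_W_idm:
  assumes W: "precyl_W W" and X: "fsss X"
  shows "(X, X, idm X) \<in> W"
proof -
  have "shom X X (idm X)" using X unfolding shom_def idm_def fsss_def by auto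
  moreover have "cmp X (idm X) (idm X) = idm X" unfolding cmp_def idm_def by (auto intro!: ext)
  ultimately have "is_iso X X (idm X)" unfolding is_iso_def by blast
  thus ?thesis using precyl_W_iso[OF W X X] by blast
qed


lemma cmp_idm_left: "shom X Y a \<Longrightarrow> cmp X (idm X) a = a"
  unfolding shom_def idm_def cmp_def by (auto intro!: ext)

lemma cmp_idm_right: "shom X Y b \<Longrightarrow> cmp X b (idm Y) = b"
  unfolding shom_def idm_def cmp_def by (auto intro!: ext)

lemma precyl_W_cancel_left:
  assumes W: "precyl_W W" and a: "(X, Y, a) \<in> W" and ba: "(X, Z, cmp X a b) \<in> W"
    and b: "(Y, Z, b) \<in> arrows"
  shows "(Y, Z, b) \<in> W"
proof -
  have X: "fsss X" and "shom X Y a" using precyl_W_arrows[OF W a] by auto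
  hence "cmp X (idm X) a = a" by (simp add: cmp_idm_left)
  moreover have "(X, X, idm X) \<in> arrows" using precyl_W_arrows[OF W precyl_W_idm[OF W X]]
    by (simp add: arrows_def)
  ultimately show ?thesis
    using precyl_W_2_out_of_6(3)[OF W _ _ b _ ba, where A=X and h="idm X"] a precyl_W_arrows[OF W a]
    by (simp add: arrows_def)
qed

lemma precyl_W_cancel_right:
  assumes W: "precyl_W W" and b: "(Y, Z, b) \<in> W" and ba: "(X, Z, cmp X a b) \<in> W"
    and a: "(X, Y, a) \<in> arrows"
  shows "(X, Y, a) \<in> W"
proof -
  have Z: "fsss Z" and "shom Y Z b" using precyl_W_arrows[OF W b] by auto
  hence "cmp Y b (idm Z) = b" by (simp add: cmp_idm_right)
  moreover have "(Z, Z, idm Z) \<in> arrows" using precyl_W_arrows[OF W precyl_W_idm[OF W Z]]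
    by (simp add: arrows_def)
  ultimately show ?thesis
    using precyl_W_2_out_of_6(1)[OF W a _ _ ba, where D=Z and f="idm Z"] b precyl_W_arrows[OF W b]
    by (simp add: arrows_def)
qed

lemma precyl_W_sup_sub_Delta:
  assumes W: "precyl_W W" and K: "is_sub_Delta n K" and L: "is_sub_Delta n L"
    and KL_L: "(sub_Delta (inf K L), sub_Delta L, idm (sub_Delta (inf K L))) \<in> W"
  shows "(sub_Delta K, sub_Delta (sup K L), idm (sub_Delta K)) \<in> W"
proof -
  let ?A = "sub_Delta (inf K L)" and ?i = "idm (sub_Delta (inf K L))" and ?j = "idm (sub_Delta K)"
  have A: "is_sub_Delta n (inf K L)" using is_sub_Delta_inf[OF K L] .
  have fsss: "fsss ?A" "fsss (sub_Delta K)" "fsss (sub_Delta L)"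
    using fsss_sub_Delta A K L by blast+
  have "is_pushout ?A (sub_Delta K) ?A ?i ?i (sub_Delta K) ?j ?i"
    using is_pushout_sub_Delta[OF K A] by (simp add: inf_absorb2 sup_absorb1)
  moreover have "is_pushout ?A (sub_Delta K) (sub_Delta L) ?i ?i (sub_Delta (sup K L)) ?j (idm (sub_Delta L))"
    using is_pushout_sub_Delta[OF K L] .
  moreover have "cmp ?A ?i ?j = cmp ?A ?i ?i" "cmp ?A ?i ?j = cmp ?A ?i (idm (sub_Delta L))"
    by (simp_all add: cmp_idm_sub_Delta)
  ultimately show ?thesis
    using precyl_W_cube[OF W, where A="?A" and B="sub_Delta K" and C="?A" and A'="?A" and
        B'="sub_Delta K" and C'="sub_Delta L" and f="?i" and g="?i" and f'="?i" and g'="?i" and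
        a="?i" and b="?j" and c="?i" and i="?j" and j="?i" and i'="?j" and j'="idm (sub_Delta L)"]
      fsss KL_L precyl_W_idm[OF W] is_mono_idm_sub_Delta[OF A] shom_idm_sub_Delta[OF A]
      shom_idm_sub_Delta[OF K]
    by simp
qed

definition face :: "nat \<Rightarrow> nat set \<Rightarrow> nat \<Rightarrow> nat list set" where
  "face n S v = {x. inj_mono v n x \<and> set x \<subseteq> S}"

lemma is_sub_Delta_face: "is_sub_Delta n (face n S)"
proof (rule is_sub_DeltaI)
  fix m v f x assume x: "x \<in> face n S v" and f: "inj_mono m v f"
  hence "set (dcomp x f) \<subseteq> set x" using set_dcomp_subset unfolding face_def inj_mono_def by blast
  thus "dcomp x f \<in> face n S m" using x f inj_mono_dcomp unfolding face_def by blast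
qed (simp add: face_def)

lemma face_mono: "S \<subseteq> T \<Longrightarrow> face n S \<le> face n T"
  unfolding face_def le_fun_def by auto

lemma face_atMost: "face n {..n} = (\<lambda>v. {x. inj_mono v n x})"
  unfolding face_def inj_mono_def by (auto simp: fun_eq_iff)

lemma Delta_eq_face: "Delta n = sub_Delta (face n {..n})"
  by (simp add: Delta_eq_sub_Delta face_atMost)

lemma dcomp_in_face: "inj_mono s n \<sigma> \<Longrightarrow> inj_mono v s y \<Longrightarrow> dcomp \<sigma> y \<in> face n (set \<sigma>) v"
  using set_dcomp_subset[of v s y \<sigma>] inj_mono_dcomp[of v s y n \<sigma>]
  unfolding face_def inj_mono_def by auto

definition Delta_map :: "nat \<Rightarrow> nat list \<Rightarrow> shom" where
  "Delta_map s \<sigma> = (\<lambda>v y. if inj_mono v s y then dcomp \<sigma> y else undefined)"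

lemma shom_Delta_map_face:
  assumes \<sigma>: "inj_mono s n \<sigma>"
  shows "shom (Delta s) (sub_Delta (face n (set \<sigma>))) (Delta_map s \<sigma>)"
  unfolding Delta_eq_sub_Delta
proof (rule shom_sub_DeltaI)
  show "Delta_map s \<sigma> v y \<in> face n (set \<sigma>) v" if "y \<in> {y. inj_mono v s y}" for v y
    using that dcomp_in_face[OF \<sigma>] unfolding Delta_map_def by auto
  show "Delta_map s \<sigma> m (dcomp y f) = dcomp (Delta_map s \<sigma> v y) f"
    if "inj_mono m v f" "y \<in> {y. inj_mono v s y}" for m v f y
    using that by (auto simp: Delta_map_def inj_mono_dcomp dcomp_assoc)
qed (simp add: Delta_map_def)

lemma is_iso_Delta_map_face:
  assumes \<sigma>: "inj_mono s n \<sigma>"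
  shows "is_iso (Delta s) (sub_Delta (face n (set \<sigma>))) (Delta_map s \<sigma>)"
proof -
  have sorted: "sorted_wrt (<) \<sigma>" and len: "length \<sigma> = Suc s" using \<sigma> unfolding inj_mono_def by auto
  obtain \<iota> where \<iota>: "\<And>a. a \<in> set \<sigma> \<Longrightarrow> \<iota> a < Suc s \<and> \<sigma> ! \<iota> a = a"
    and \<iota>_nth: "\<And>i. i < Suc s \<Longrightarrow> \<iota> (\<sigma> ! i) = i"
    and \<iota>_mono: "\<And>a b. a \<in> set \<sigma> \<Longrightarrow> b \<in> set \<sigma> \<Longrightarrow> a < b \<Longrightarrow> \<iota> a < \<iota> b"
    using strict_sorted_nth_inverse[OF sorted] len by metis
  define \<psi> where "\<psi> = (\<lambda>v x. if x \<in> face n (set \<sigma>) v then map \<iota> x else undefined)"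
  have \<psi>_inj_mono: "inj_mono v s (map \<iota> x)" if "x \<in> face n (set \<sigma>) v" for v x
  proof -
    have x: "length x = Suc v" "sorted_wrt (<) x" "set x \<subseteq> set \<sigma>"
      using that unfolding face_def inj_mono_def by auto
    have "sorted_wrt (\<lambda>a b. \<iota> a < \<iota> b) x"
      using x(2,3) \<iota>_mono by (intro sorted_wrt_mono_rel[OF _ x(2)]) auto
    thus ?thesis using x \<iota> unfolding inj_mono_def by (auto simp: sorted_wrt_map less_Suc_eq_le)
  qed
  have "shom (sub_Delta (face n (set \<sigma>))) (Delta s) \<psi>"
    unfolding Delta_eq_sub_Delta
  proof (rule shom_sub_DeltaI)
    show "\<psi> m (dcomp x f) = dcomp (\<psi> v x) f"
      if f: "inj_mono m v f" and x: "x \<in> face n (set \<sigma>) v" for m v f x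
    proof -
      have "length x = Suc v" using x unfolding face_def inj_mono_def by simp
      hence "map \<iota> (dcomp x f) = dcomp (map \<iota> x) f"
        using inj_mono_nth_less[OF f] unfolding dcomp_def by auto
      thus ?thesis using x is_sub_Delta_dcomp[OF is_sub_Delta_face x f] unfolding \<psi>_def by simp
    qed
  qed (auto simp: \<psi>_def \<psi>_inj_mono)
  moreover have "cmp (Delta s) (Delta_map s \<sigma>) \<psi> = idm (Delta s)"
  proof (intro ext)
    fix v y
    have "map \<iota> (dcomp \<sigma> y) = y" if "inj_mono v s y"
      using that inj_mono_nth_less[OF that] \<iota>_nth unfolding dcomp_def by (simp add: map_idI)
    thus "cmp (Delta s) (Delta_map s \<sigma>) \<psi> v y = idm (Delta s) v y"
      unfolding cmp_def idm_def Delta_eq_sub_Delta Delta_map_def \<psi>_def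
      by (auto simp: dcomp_in_face[OF \<sigma>])
  qed
  moreover have "cmp (sub_Delta (face n (set \<sigma>))) \<psi> (Delta_map s \<sigma>) = idm (sub_Delta (face n (set \<sigma>)))"
  proof (intro ext)
    fix v x
    have "dcomp \<sigma> (map \<iota> x) = x" if "x \<in> face n (set \<sigma>) v"
      using that \<iota> unfolding face_def dcomp_def by (auto intro!: map_idI)
    thus "cmp (sub_Delta (face n (set \<sigma>))) \<psi> (Delta_map s \<sigma>) v x = idm (sub_Delta (face n (set \<sigma>))) v x"
      unfolding cmp_def idm_sub_Delta Delta_map_def \<psi>_def by (auto simp: \<psi>_inj_mono)
  qed
  ultimately show ?thesis unfolding is_iso_def using shom_Delta_map_face[OF \<sigma>] by blast
qed

lemma precyl_W_face_incl_Delta: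
  assumes W: "precyl_W W"
    and rep: "\<And>m n g. shom (Delta m) (Delta n) g \<Longrightarrow> (Delta m, Delta n, g) \<in> W"
    and S: "S \<noteq> {}" "S \<subseteq> {..n}"
  shows "(sub_Delta (face n S), Delta n, idm (sub_Delta (face n S))) \<in> W"
proof -
  define \<sigma> where "\<sigma> = sorted_list_of_set S"
  define s where "s = card S - 1"
  have "finite S" using S finite_subset by blast
  hence set_\<sigma>: "set \<sigma> = S" and \<sigma>: "inj_mono s n \<sigma>"
    using S unfolding \<sigma>_def s_def inj_mono_def by (auto simp: card_gt_0_iff)
  have F: "fsss (sub_Delta (face n S))" using fsss_sub_Delta[OF is_sub_Delta_face] .
  have F_le: "face n S \<le> face n {..n}" using face_mono[OF S(2)] .
  have "(Delta s, sub_Delta (face n S), Delta_map s \<sigma>) \<in> W"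
    using precyl_W_iso[OF W _ F] is_iso_Delta_map_face[OF \<sigma>] fsss_sub_Delta[OF is_sub_Delta_face]
    unfolding set_\<sigma> Delta_eq_face by metis
  moreover have "shom (Delta s) (sub_Delta (face n S)) (Delta_map s \<sigma>)"
    using shom_Delta_map_face[OF \<sigma>] unfolding set_\<sigma> .
  hence "(Delta s, Delta n, cmp (Delta s) (Delta_map s \<sigma>) (idm (sub_Delta (face n S)))) \<in> W"
    using rep shom_sub_Delta_mono[OF _ F_le] by (simp add: cmp_idm_right Delta_eq_face)
  moreover have "(sub_Delta (face n S), Delta n, idm (sub_Delta (face n S))) \<in> arrows"
    using F fsss_sub_Delta[OF is_sub_Delta_face] shom_idm_sub_Delta[OF is_sub_Delta_face F_le]
    unfolding arrows_def Delta_eq_face by simp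
  ultimately show ?thesis using precyl_W_cancel_left[OF W] by blast
qed

lemma precyl_W_face_incl_face:
  assumes W: "precyl_W W"
    and rep: "\<And>m n g. shom (Delta m) (Delta n) g \<Longrightarrow> (Delta m, Delta n, g) \<in> W"
    and T: "T \<noteq> {}" "T \<subseteq> S" and S: "S \<subseteq> {..n}"
  shows "(sub_Delta (face n T), sub_Delta (face n S), idm (sub_Delta (face n T))) \<in> W"
proof (rule precyl_W_cancel_right[OF W])
  show "(sub_Delta (face n S), Delta n, idm (sub_Delta (face n S))) \<in> W"
    using precyl_W_face_incl_Delta[OF W rep _ S] T by blast
  show "(sub_Delta (face n T), Delta n,
      cmp (sub_Delta (face n T)) (idm (sub_Delta (face n T))) (idm (sub_Delta (face n S)))) \<in> W"
    using precyl_W_face_incl_Delta[OF W rep T(1)] T S by (simp add: cmp_idm_sub_Delta face_mono)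
  show "(sub_Delta (face n T), sub_Delta (face n S), idm (sub_Delta (face n T))) \<in> arrows"
    using fsss_sub_Delta shom_idm_sub_Delta is_sub_Delta_face face_mono[OF T(2)]
    unfolding arrows_def by blast
qed

definition facet_union :: "nat \<Rightarrow> nat set \<Rightarrow> nat set \<Rightarrow> nat \<Rightarrow> nat list set" where
  "facet_union n S J v = {x. inj_mono v n x \<and> (\<exists>j\<in>J. set x \<subseteq> S - {j})}"

lemma facet_union_eq_Sup: "facet_union n S J = (SUP j\<in>J. face n (S - {j}))"
  unfolding facet_union_def face_def by (auto simp: fun_eq_iff)

lemma is_sub_Delta_facet_union: "is_sub_Delta n (facet_union n S J)"
  unfolding facet_union_eq_Sup
  by (rule is_sub_DeltaI)
    (auto intro: is_sub_Delta_inj_mono[OF is_sub_Delta_face] bexI is_sub_Delta_dcomp[OF is_sub_Delta_face])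

lemma facet_union_singleton: "facet_union n S {j} = face n (S - {j})"
  by (simp add: facet_union_eq_Sup)

lemma facet_union_insert: "facet_union n S (insert j J) = sup (facet_union n S J) (face n (S - {j}))"
  by (simp add: facet_union_eq_Sup sup_commute)

lemma facet_union_Diff: "facet_union n (S - {j}) J = inf (facet_union n S J) (face n (S - {j}))"
  unfolding facet_union_def face_def by (auto simp: fun_eq_iff)

lemma facet_union_le_face: "facet_union n S J \<le> face n S"
  unfolding facet_union_def face_def le_fun_def by auto

lemma precyl_W_facet_union_incl_face:
  assumes W: "precyl_W W"
    and rep: "\<And>m n g. shom (Delta m) (Delta n) g \<Longrightarrow> (Delta m, Delta n, g) \<in> W"
  shows "S \<subseteq> {..n} \<Longrightarrow> J \<subseteq> S \<Longrightarrow> J \<noteq> {} \<Longrightarrow> J \<noteq> S \<Longrightarrow>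
    (sub_Delta (facet_union n S J), sub_Delta (face n S), idm (sub_Delta (facet_union n S J))) \<in> W"
proof (induction "card S" arbitrary: S J rule: less_induct)
  case less
  have "finite J" using less.prems(1,2) by (meson finite_atMost finite_subset)
  thus ?case using less.prems(3) less.prems(2,4)
  proof (induction J rule: finite_ne_induct)
    case (singleton j)
    thus ?case
      using precyl_W_face_incl_face[OF W rep _ _ less.prems(1), of "S - {j}"]
      by (auto simp: facet_union_singleton)
  next
    case (insert j J)
    let ?K = "facet_union n S J" and ?L = "face n (S - {j})"
    have "(sub_Delta (inf ?K ?L), sub_Delta ?L, idm (sub_Delta (inf ?K ?L))) \<in> W"
      unfolding facet_union_Diff[symmetric]
    proof (rule less.hyps)
      have "finite S" using less.prems(1) by (meson finite_atMost finite_subset)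
      thus "card (S - {j}) < card S" using insert.prems(1) by (intro card_Diff1_less) auto
      show "J \<noteq> S - {j}" using insert by auto
      show "S - {j} \<subseteq> {..n}" using less.prems(1) by auto
      show "J \<subseteq> S - {j}" "J \<noteq> {}" using insert by auto
    qed
    hence "(sub_Delta ?K, sub_Delta (sup ?K ?L), idm (sub_Delta ?K)) \<in> W"
      by (rule precyl_W_sup_sub_Delta[OF W is_sub_Delta_facet_union is_sub_Delta_face])
    moreover have "(sub_Delta ?K, sub_Delta (face n S),
        cmp (sub_Delta ?K) (idm (sub_Delta ?K)) (idm (sub_Delta (sup ?K ?L)))) \<in> W"
      using insert.IH insert.hyps(2) insert.prems by (auto simp: cmp_idm_sub_Delta)
    moreover have "(sub_Delta (sup ?K ?L), sub_Delta (face n S), idm (sub_Delta (sup ?K ?L))) \<in> arrows"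
      using fsss_sub_Delta[OF is_sub_Delta_facet_union] fsss_sub_Delta[OF is_sub_Delta_face]
        shom_idm_sub_Delta[OF is_sub_Delta_facet_union facet_union_le_face]
      unfolding arrows_def facet_union_insert[symmetric] by simp
    ultimately show ?case
      unfolding facet_union_insert by (rule precyl_W_cancel_left[OF W])
  qed
qed

lemma Horn_eq_facet_union: "Horn n k = sub_Delta (facet_union n {..n} ({..n} - {k}))"
proof -
  have "horn_simp n k = facet_union n {..n} ({..n} - {k})"
    unfolding horn_simp_def facet_union_def inj_mono_def by (auto simp: fun_eq_iff)
  thus ?thesis unfolding Horn_def sub_Delta_def by simp
qed

lemma precyl_W_horn_incl:
  assumes W: "precyl_W W"
    and rep: "\<And>m n g. shom (Delta m) (Delta n) g \<Longrightarrow> (Delta m, Delta n, g) \<in> W"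
    and "1 \<le> n" "k \<le> n"
  shows "(Horn n k, Delta n, horn_incl n k) \<in> W"
proof -
  let ?J = "{..n} - {k}"
  have "?J \<noteq> {}" "?J \<noteq> {..n}" using assms(3,4) by (cases "k = 0"; auto)+
  hence "(sub_Delta (facet_union n {..n} ?J), sub_Delta (face n {..n}),
      idm (sub_Delta (facet_union n {..n} ?J))) \<in> W"
    by (intro precyl_W_facet_union_incl_face[OF W rep]) auto
  thus ?thesis unfolding horn_incl_def Horn_eq_facet_union Delta_eq_face .
qed

theorem mainTheorem17:
  fixes n k :: nat
  assumes "1 \<le> n" and "k \<le> n"
  shows "is_mono (Horn n k) (Delta n) (horn_incl n k) \<and>
         (Horn n k, Delta n, horn_incl n k) \<in> W0"
proof
  show "is_mono (Horn n k) (Delta n) (horn_incl n k)"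
    unfolding horn_incl_def Horn_eq_facet_union Delta_eq_face
    using is_mono_idm_sub_Delta[OF is_sub_Delta_facet_union facet_union_le_face] .
  have "(Horn n k, Delta n, horn_incl n k) \<in> W"
    if "precyl_W W" and "{(Delta m, Delta n, g) |m n g. shom (Delta m) (Delta n) g} \<subseteq> W" for W
    using precyl_W_horn_incl[OF that(1) _ assms] that(2) by blast
  thus "(Horn n k, Delta n, horn_incl n k) \<in> W0" unfolding W0_def by blast
qed

end
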